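(* Let $r\in\mathcal R$ be a universal proper distance matrix and let $(\mathcal U_r,\rho_r)$ be the completion of the metric space $(\mathbb N,r)$. Then for any enumeration $u_1,u_2,\dots$ of a countable everywhere dense subset of $\mathcal U_r$, the distance matrix $\{\rho_r(u_i,u_j)\}_{i,j\ge1}$ is a universal distance matrix.
   Context: $\mathcal R$ is the set of infinite real matrices $r=\{r_{i,j}\}_{i,j\ge1}$ with $r_{i,i}=0$, $r_{i,j}\ge0$, $r_{i,j}=r_{j,i}$, $r_{i,k}+r_{k,j}\ge r_{i,j}$; $r$ is proper if $r_{i,j}>0$ for $i\ne j$; $p_n(r)$ is the upper-left $n\times n$ corner. For an $n\times n$ distance matrix $q$, $A(q)=\{a\in\mathbb R^n:|a_i-a_j|\le q_{i,j}\le a_i+a_j\ \forall i,j\}$. A proper $r\in\mathcal R$ is universal if for every $n$, every $a\in A(p_n(r))$ and every $\epsilon>0$ there is $m\in\mathbb N$ with $\max_{1\le i\le n}|r_{i,m}-a_i|<\epsilon$. *)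

theory Defs
  imports "HOL-Analysis.Analysis"
begin

text \<open>Infinite matrices are indexed by nat starting at 0 (the paper starts at 1).\<close>

definition dist_matrix :: "(nat \<Rightarrow> nat \<Rightarrow> real) \<Rightarrow> bool" where
  "dist_matrix r \<longleftrightarrow> (\<forall>i. r i i = 0) \<and> (\<forall>i j. 0 \<le> r i j) \<and> (\<forall>i j. r i j = r j i)
     \<and> (\<forall>i j k. r i j \<le> r i k + r k j)"

definition proper_dm :: "(nat \<Rightarrow> nat \<Rightarrow> real) \<Rightarrow> bool" where
  "proper_dm r \<longleftrightarrow> dist_matrix r \<and> (\<forall>i j. i \<noteq> j \<longrightarrow> 0 < r i j)"

definition A_set :: "(nat \<Rightarrow> nat \<Rightarrow> real) \<Rightarrow> nat \<Rightarrow> (nat \<Rightarrow> real) set" where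
  "A_set r n = {a. \<forall>i<n. \<forall>j<n. \<bar>a i - a j\<bar> \<le> r i j \<and> r i j \<le> a i + a j}"

definition universal_dm :: "(nat \<Rightarrow> nat \<Rightarrow> real) \<Rightarrow> bool" where
  "universal_dm r \<longleftrightarrow> proper_dm r \<and>
     (\<forall>n. \<forall>a\<in>A_set r n. \<forall>\<epsilon>>0. \<exists>m. \<forall>i<n. \<bar>r i m - a i\<bar> < \<epsilon>)"

end

theory Submission
  imports Defs
begin

text \<open>Given an admissible vector \<open>a\<close> for the points \<open>u\<^sub>0, \<dots>, u\<^sub>n\<^sub>-\<^sub>1\<close>, the function
  \<open>f z = min\<^sub>i (a\<^sub>i + \<rho>(u\<^sub>i, z))\<close> is a Katetov function on the whole space with \<open>f u\<^sub>i = a\<^sub>i\<close>.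
  Its values at \<open>e\<^sub>0, \<dots>, e\<^sub>N\<^sub>-\<^sub>1\<close> form an admissible vector for \<open>r\<close>, so universality of \<open>r\<close>
  yields a point \<open>e\<^sub>m\<close> whose distances to these \<open>e\<^sub>l\<close> approximate \<open>f\<close>. Choosing \<open>N\<close> so that
  every \<open>u\<^sub>i\<close> is close to some \<open>e\<^sub>l\<close>, and then \<open>u\<^sub>m\<^sub>'\<close> close to \<open>e\<^sub>m\<close>, the distances
  \<open>\<rho>(u\<^sub>i, u\<^sub>m\<^sub>')\<close> approximate \<open>a\<^sub>i\<close>, all errors being controlled because \<open>f\<close> and \<open>\<rho>\<close> are
  1-Lipschitz.\<close>

definition katetov :: "('a::metric_space \<Rightarrow> real) \<Rightarrow> bool" where
  "katetov f \<longleftrightarrow> (\<forall>z w. \<bar>f z - f w\<bar> \<le> dist z w \<and> dist z w \<le> f z + f w)"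

definition katetov_ext :: "(nat \<Rightarrow> 'a::metric_space) \<Rightarrow> (nat \<Rightarrow> real) \<Rightarrow> nat \<Rightarrow> 'a \<Rightarrow> real" where
  "katetov_ext x a n z = Min ((\<lambda>i. a i + dist (x i) z) ` {..<n})"

lemma katetov_imp_A_set:
  assumes "katetov f"
  shows "(\<lambda>i. f (x i)) \<in> A_set (\<lambda>i j. dist (x i) (x j)) n"
  using assms unfolding katetov_def A_set_def by blast

lemma katetov_ext_le:
  "i < n \<Longrightarrow> katetov_ext x a n z \<le> a i + dist (x i) z"
  unfolding katetov_ext_def by (intro Min_le) auto

lemma katetov_ext_attained:
  assumes "0 < n"
  obtains i where "i < n" "katetov_ext x a n z = a i + dist (x i) z"
proof -
  have "katetov_ext x a n z \<in> (\<lambda>i. a i + dist (x i) z) ` {..<n}"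
    unfolding katetov_ext_def using assms by (intro Min_in) auto
  then show thesis using that by auto
qed

lemma katetov_ext_at_points:
  assumes "a \<in> A_set (\<lambda>i j. dist (x i) (x j)) n" and "i < n"
  shows "katetov_ext x a n (x i) = a i"
proof -
  obtain j where j: "j < n" "katetov_ext x a n (x i) = a j + dist (x j) (x i)"
    using katetov_ext_attained[of n] \<open>i < n\<close> by (metis gr_zeroI not_less_zero)
  have "a i \<le> a j + dist (x j) (x i)"
    using assms j(1) unfolding A_set_def by (fastforce simp: dist_commute abs_le_iff)
  with j katetov_ext_le[OF \<open>i < n\<close>, of x a "x i"] show ?thesis by simp
qed

lemma katetov_katetov_ext:
  assumes a: "a \<in> A_set (\<lambda>i j. dist (x i) (x j)) n" and "0 < n"
  shows "katetov (katetov_ext x a n)"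
  unfolding katetov_def
proof (intro allI conjI)
  fix z w
  let ?f = "katetov_ext x a n"
  obtain i where i: "i < n" "?f w = a i + dist (x i) w"
    using katetov_ext_attained[OF \<open>0 < n\<close>] by blast
  obtain j where j: "j < n" "?f z = a j + dist (x j) z"
    using katetov_ext_attained[OF \<open>0 < n\<close>] by blast
  have "?f z \<le> a i + dist (x i) z" "?f w \<le> a j + dist (x j) w"
    using i(1) j(1) by (simp_all add: katetov_ext_le)
  moreover have "dist (x i) z \<le> dist (x i) w + dist z w" "dist (x j) w \<le> dist (x j) z + dist z w"
    using dist_triangle[of "x i" z w] dist_triangle[of "x j" w z] dist_commute[of w z] by linarith+
  ultimately show "\<bar>?f z - ?f w\<bar> \<le> dist z w"
    using i j by linarith
  have "dist (x j) (x i) \<le> a j + a i"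
    using a i(1) j(1) unfolding A_set_def by blast
  moreover have "dist z w \<le> dist (x j) z + dist (x j) (x i) + dist (x i) w"
    using dist_triangle[of z w "x i"] dist_triangle[of z "x i" "x j"] dist_commute[of z "x j"]
    by linarith
  ultimately show "dist z w \<le> ?f z + ?f w"
    using i j by linarith
qed

lemma dense_range_approachable:
  assumes "closure (range x) = UNIV" and "0 < d"
  obtains k where "dist (x k) p < d"
  using assms closure_approachable[of p "range x"] by auto

lemma proper_dm_dist_inj:
  "inj x \<Longrightarrow> proper_dm (\<lambda>i j. dist (x i) (x j))"
  unfolding proper_dm_def dist_matrix_def
  by (auto simp: dist_commute dist_triangle2 inj_eq)

text \<open>Universality of \<open>r\<close> only lets a point \<open>e\<^sub>m\<close> realize \<open>f\<close> approximately at the \<open>e\<^sub>l\<close>;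
  at an arbitrary point \<open>z\<close> it is transferred from a nearby \<open>e\<^sub>l\<close> at the cost of
  \<open>2 \<rho>(z, e\<^sub>l)\<close>, since both \<open>f\<close> and \<open>\<rho>(\<cdot>, e\<^sub>m)\<close> are 1-Lipschitz.\<close>

lemma universal_dm_approx_katetov:
  fixes e :: "nat \<Rightarrow> 'a::metric_space"
  assumes univ: "universal_dm r"
    and r: "\<forall>i j. dist (e i) (e j) = r i j"
    and dense: "closure (range e) = UNIV"
    and f: "katetov f"
    and "finite S" and "0 < \<epsilon>"
  obtains m where "\<forall>z\<in>S. \<bar>dist z (e m) - f z\<bar> < \<epsilon>"
proof -
  define d where "d = \<epsilon> / 3"
  have "0 < d" using \<open>0 < \<epsilon>\<close> by (simp add: d_def)
  have "\<forall>z. \<exists>l. dist (e l) z < d"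
    using dense_range_approachable[OF dense \<open>0 < d\<close>] by metis
  then obtain k where k: "\<And>z. dist (e (k z)) z < d"
    by metis
  define N where "N = Suc (Max (k ` S))"
  have kN: "k z < N" if "z \<in> S" for z
    using \<open>finite S\<close> that by (simp add: N_def le_imp_less_Suc)
  have "(\<lambda>l. f (e l)) \<in> A_set r N"
    using katetov_imp_A_set[OF f, of e N] r by simp
  then obtain m where m: "\<And>l. l < N \<Longrightarrow> \<bar>dist (e l) (e m) - f (e l)\<bar> < d"
    using univ \<open>0 < d\<close> r unfolding universal_dm_def by metis
  have "\<bar>dist z (e m) - f z\<bar> < \<epsilon>" if "z \<in> S" for z
  proof -
    have "\<bar>f (e (k z)) - f z\<bar> < d"
      using f k[of z] unfolding katetov_def by (meson le_less_trans)
    moreover have "\<bar>dist z (e m) - dist (e (k z)) (e m)\<bar> < d"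
      using k[of z] dist_triangle[of z "e m" "e (k z)"] dist_triangle[of "e (k z)" "e m" z]
        dist_commute[of z "e (k z)"]
      unfolding abs_less_iff by linarith
    ultimately show ?thesis
      using m[OF kN[OF that]] unfolding d_def by linarith
  qed
  then show thesis using that by blast
qed

theorem lemma6:
  fixes r :: "nat \<Rightarrow> nat \<Rightarrow> real"
    and e :: "nat \<Rightarrow> 'a::complete_space"
    and u :: "nat \<Rightarrow> 'a"
  assumes "universal_dm r"
    and "\<forall>i j. dist (e i) (e j) = r i j"
    and "closure (range e) = UNIV"
    and "inj u"
    and "closure (range u) = UNIV"
  shows "universal_dm (\<lambda>i j. dist (u i) (u j))"
  unfolding universal_dm_def
proof (intro conjI ballI allI impI)
  show "proper_dm (\<lambda>i j. dist (u i) (u j))"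
    using \<open>inj u\<close> by (rule proper_dm_dist_inj)
next
  fix n a and \<epsilon> :: real
  assume a: "a \<in> A_set (\<lambda>i j. dist (u i) (u j)) n" and "0 < \<epsilon>"
  show "\<exists>m. \<forall>i<n. \<bar>dist (u i) (u m) - a i\<bar> < \<epsilon>"
  proof (cases "n = 0")
    case False
    let ?f = "katetov_ext u a n"
    have "katetov ?f" using a False by (simp add: katetov_katetov_ext)
    then obtain m where m: "\<forall>z\<in>u ` {..<n}. \<bar>dist z (e m) - ?f z\<bar> < \<epsilon> / 2"
      using universal_dm_approx_katetov[OF assms(1-3)] \<open>0 < \<epsilon>\<close>
      by (metis finite_imageI finite_lessThan half_gt_zero)
    obtain m' where m': "dist (u m') (e m) < \<epsilon> / 2"
      using dense_range_approachable[OF assms(5)] \<open>0 < \<epsilon>\<close> by (metis half_gt_zero)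
    have "\<bar>dist (u i) (u m') - a i\<bar> < \<epsilon>" if "i < n" for i
    proof -
      have "\<bar>dist (u i) (e m) - a i\<bar> < \<epsilon> / 2"
        using m that katetov_ext_at_points[OF a that] by (metis image_eqI lessThan_iff)
      then show ?thesis
        using m' dist_triangle[of "u i" "u m'" "e m"] dist_triangle[of "u i" "e m" "u m'"]
          dist_commute[of "u m'" "e m"]
        by linarith
    qed
    then show ?thesis by blast
  qed simp
qed

end
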